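(* With the setting in the context, let $m\in\mathrm{hom}(C,G)_0$. The clock operator $Q_m$ distinguishes between ground states, in the sense that for every $f\in\ker(\delta^0)$ the vector $Q_m\mathcal A_0|f\rangle$ is a scalar multiple of $\mathcal A_0|f\rangle$, if and only if $m\in\ker(\delta_0)$, i.e. $m(\delta^{-1}t)=1$ for all $t\in\mathrm{hom}(C,G)^{-1}$.
   Context: $(C_\bullet,\partial^C_\bullet)$ is a chain complex with each $C_n$ free abelian on a finite set $K_n$, $K_n\ne\emptyset$ for finitely many $n$; $(G_\bullet,\partial^G_\bullet)$ is a chain complex of finite abelian groups. $\mathrm{hom}(C,G)^p=\prod_n\mathrm{Hom}(C_n,G_{n-p})$ with $(\delta^pf)_n=f_{n-1}\partial^C_n-(-1)^p\partial^G_{n-p}f_n$. $\mathrm{hom}(C,G)_p=\mathrm{Hom}(\mathrm{hom}(C,G)^p,U(1))$ (written additively), $\chi_m(f)=m(f)$, and $\delta_0:\mathrm{hom}(C,G)_0\to\mathrm{hom}(C,G)_{-1}$, $\delta_0m=m\circ\delta^{-1}$. $\mathcal H=\bigotimes_n\bigotimes_{x\in K_n}\mathbb C[G_n]$ with orthonormal basis $|f\rangle$, $f\in\mathrm{hom}(C,G)^0$. $Q_m|f\rangle=\chi_m(f)|f\rangle$, $P_t|f\rangle=|f+t\rangle$, $A_t=P_{\delta^{-1}t}$ for $t\in\mathrm{hom}(C,G)^{-1}$, and $\mathcal A_0=\frac1{|\mathrm{hom}(C,G)^{-1}|}\sum_{t\in\mathrm{hom}(C,G)^{-1}}A_t$.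 *)

theory Defs
  imports Complex_Main "HOL-Algebra.FiniteProduct"
begin

text \<open>
The chain complex C is given by finite sets of generators K n (n :: int) and
integer boundary coefficients dC n x y = coefficient of generator y in K (n-1)
in the boundary of the generator x in K n.
The finite abelian groups G n are HOL-Algebra commutative groups (written
multiplicatively) with boundary homomorphisms dG n : G n -> G (n-1).
An element f of hom(C,G)^p = prod_n Hom(C_n, G_(n-p)) is identified with the
values on generators: f n x in carrier (G (n-p)) for x in K n, and the
(irrelevant) value f n x is normalised to the unit of G (n-p) when x is not in K n.
\<close>

definition chain_setup ::
  "(int \<Rightarrow> 'k set) \<Rightarrow> (int \<Rightarrow> 'k \<Rightarrow> 'k \<Rightarrow> int)
   \<Rightarrow> (int \<Rightarrow> 'g monoid) \<Rightarrow> (int \<Rightarrow> 'g \<Rightarrow> 'g) \<Rightarrow> bool" where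
  "chain_setup K dC G dG \<longleftrightarrow>
     (\<forall>n. finite (K n)) \<and> finite {n. K n \<noteq> {}} \<and>
     (\<forall>n x z. x \<in> K n \<longrightarrow> z \<in> K (n - 2) \<longrightarrow>
        (\<Sum>y\<in>K (n - 1). dC n x y * dC (n - 1) y z) = 0) \<and>
     (\<forall>n. comm_group (G n) \<and> finite (carrier (G n))) \<and>
     (\<forall>n. dG n \<in> hom (G n) (G (n - 1))) \<and>
     (\<forall>n a. a \<in> carrier (G n) \<longrightarrow> dG (n - 1) (dG n a) = \<one>\<^bsub>G (n - 2)\<^esub>)"

definition cochains ::
  "(int \<Rightarrow> 'k set) \<Rightarrow> (int \<Rightarrow> 'g monoid) \<Rightarrow> int \<Rightarrow> (int \<Rightarrow> 'k \<Rightarrow> 'g) set" where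
  "cochains K G p = {f. \<forall>n x. (x \<in> K n \<longrightarrow> f n x \<in> carrier (G (n - p))) \<and>
                              (x \<notin> K n \<longrightarrow> f n x = \<one>\<^bsub>G (n - p)\<^esub>)}"

definition cochain_add ::
  "(int \<Rightarrow> 'g monoid) \<Rightarrow> int \<Rightarrow> (int \<Rightarrow> 'k \<Rightarrow> 'g) \<Rightarrow> (int \<Rightarrow> 'k \<Rightarrow> 'g) \<Rightarrow> (int \<Rightarrow> 'k \<Rightarrow> 'g)" where
  "cochain_add G p f g = (\<lambda>n x. f n x \<otimes>\<^bsub>G (n - p)\<^esub> g n x)"

definition cochain_zero :: "(int \<Rightarrow> 'g monoid) \<Rightarrow> int \<Rightarrow> (int \<Rightarrow> 'k \<Rightarrow> 'g)" where
  "cochain_zero G p = (\<lambda>n x. \<one>\<^bsub>G (n - p)\<^esub>)"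

text \<open>(delta^p f)_n = f_(n-1) o dC_n - (-1)^p dG_(n-p) o f_n, evaluated on generators x in K n
  (written multiplicatively in G (n-1-p)).\<close>
definition coboundary ::
  "(int \<Rightarrow> 'k set) \<Rightarrow> (int \<Rightarrow> 'k \<Rightarrow> 'k \<Rightarrow> int) \<Rightarrow> (int \<Rightarrow> 'g monoid) \<Rightarrow> (int \<Rightarrow> 'g \<Rightarrow> 'g)
   \<Rightarrow> int \<Rightarrow> (int \<Rightarrow> 'k \<Rightarrow> 'g) \<Rightarrow> (int \<Rightarrow> 'k \<Rightarrow> 'g)" where
  "coboundary K dC G dG p f = (\<lambda>n x.
     if x \<in> K n then
       (finprod (G (n - 1 - p)) (\<lambda>y. f (n - 1) y [^]\<^bsub>G (n - 1 - p)\<^esub> dC n x y) (K (n - 1)))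
       \<otimes>\<^bsub>G (n - 1 - p)\<^esub>
       (if even p then inv\<^bsub>G (n - 1 - p)\<^esub> (dG (n - p) (f n x)) else dG (n - p) (f n x))
     else \<one>\<^bsub>G (n - 1 - p)\<^esub>)"

text \<open>hom(C,G)_0: characters hom(C,G)^0 -> U(1), U(1) realised as unit complex numbers.\<close>
definition character ::
  "(int \<Rightarrow> 'k set) \<Rightarrow> (int \<Rightarrow> 'g monoid) \<Rightarrow> ((int \<Rightarrow> 'k \<Rightarrow> 'g) \<Rightarrow> complex) \<Rightarrow> bool" where
  "character K G m \<longleftrightarrow>
     (\<forall>f\<in>cochains K G 0. cmod (m f) = 1) \<and>
     (\<forall>f\<in>cochains K G 0. \<forall>g\<in>cochains K G 0. m (cochain_add G 0 f g) = m f * m g)"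

text \<open>The Hilbert space H with orthonormal basis |f>, f in hom(C,G)^0, is realised as
  coefficient functions hom(C,G)^0 -> complex; ket f is the basis vector |f>.\<close>
definition ket :: "(int \<Rightarrow> 'k \<Rightarrow> 'g) \<Rightarrow> ((int \<Rightarrow> 'k \<Rightarrow> 'g) \<Rightarrow> complex)" where
  "ket f = (\<lambda>g. if g = f then 1 else 0)"

definition clockQ ::
  "((int \<Rightarrow> 'k \<Rightarrow> 'g) \<Rightarrow> complex) \<Rightarrow> ((int \<Rightarrow> 'k \<Rightarrow> 'g) \<Rightarrow> complex) \<Rightarrow> ((int \<Rightarrow> 'k \<Rightarrow> 'g) \<Rightarrow> complex)" where
  "clockQ m \<psi> = (\<lambda>g. m g * \<psi> g)"

text \<open>Shift operator P_t |f> = |f + t>, extended linearly.\<close>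
definition shiftP ::
  "(int \<Rightarrow> 'k set) \<Rightarrow> (int \<Rightarrow> 'g monoid) \<Rightarrow> (int \<Rightarrow> 'k \<Rightarrow> 'g)
   \<Rightarrow> ((int \<Rightarrow> 'k \<Rightarrow> 'g) \<Rightarrow> complex) \<Rightarrow> ((int \<Rightarrow> 'k \<Rightarrow> 'g) \<Rightarrow> complex)" where
  "shiftP K G t \<psi> = (\<lambda>g. \<Sum>f\<in>{f\<in>cochains K G 0. cochain_add G 0 f t = g}. \<psi> f)"

definition opA where
  "opA K dC G dG t = shiftP K G (coboundary K dC G dG (-1) t)"

definition projA0 ::
  "(int \<Rightarrow> 'k set) \<Rightarrow> (int \<Rightarrow> 'k \<Rightarrow> 'k \<Rightarrow> int) \<Rightarrow> (int \<Rightarrow> 'g monoid) \<Rightarrow> (int \<Rightarrow> 'g \<Rightarrow> 'g)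
   \<Rightarrow> ((int \<Rightarrow> 'k \<Rightarrow> 'g) \<Rightarrow> complex) \<Rightarrow> ((int \<Rightarrow> 'k \<Rightarrow> 'g) \<Rightarrow> complex)" where
  "projA0 K dC G dG \<psi> = (\<lambda>g. (\<Sum>t\<in>cochains K G (-1). opA K dC G dG t \<psi> g)
                                / of_nat (card (cochains K G (-1))))"

end

theory Submission
  imports Defs
begin

text \<open>A_0 |f> is a uniform superposition over the coset f + im(delta^-1), so it is an eigenvector
  of the diagonal operator Q_m exactly when the character m is constant on that coset. As
  m(f + delta t) = m(f) m(delta t), this holds for every f iff m is trivial on im(delta^-1); for
  the converse take f = 0, whose coset contains 0, where m is 1.\<close>

lemma chain_setup_comm_group: "chain_setup K dC G dG \<Longrightarrow> comm_group (G n)"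
  by (simp add: chain_setup_def)

lemma chain_setup_group_hom:
  assumes "chain_setup K dC G dG"
  shows "group_hom (G n) (G (n - 1)) (dG n)"
  using assms chain_setup_comm_group[OF assms, of n] chain_setup_comm_group[OF assms, of "n - 1"]
  by (simp add: chain_setup_def group_hom_def group_hom_axioms_def comm_group_def)

lemma cochains_in_carrier:
  "f \<in> cochains K G p \<Longrightarrow> comm_group (G (n - p)) \<Longrightarrow> f n x \<in> carrier (G (n - p))"
  by (cases "x \<in> K n") (auto simp: cochains_def comm_group_def group_def monoid.one_closed)

lemma finite_cochains:
  assumes cs: "chain_setup K dC G dG"
  shows "finite (cochains K G p)"
proof -
  let ?I = "Sigma {n. K n \<noteq> {}} K"
  let ?restr = "\<lambda>f. restrict (\<lambda>(n, x). f n x) ?I"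
  have "inj_on ?restr (cochains K G p)"
  proof (rule inj_onI, intro ext)
    fix f g n x
    assume f: "f \<in> cochains K G p" and g: "g \<in> cochains K G p" and eq: "?restr f = ?restr g"
    show "f n x = g n x"
    proof (cases "x \<in> K n")
      case True
      then have "K n \<noteq> {}" by blast
      then show ?thesis using True fun_cong[OF eq, of "(n, x)"] by simp
    next
      case False
      then show ?thesis using f g by (simp add: cochains_def)
    qed
  qed
  moreover have "?restr ` cochains K G p \<subseteq> PiE ?I (\<lambda>(n, x). carrier (G (n - p)))"
    unfolding image_subset_iff restrict_PiE_iff by (auto simp: cochains_def)
  moreover have "finite (PiE ?I (\<lambda>(n, x). carrier (G (n - p))))"
    using cs by (intro finite_PiE) (auto simp: chain_setup_def)
  ultimately show ?thesis
    by (metis finite_imageD finite_subset)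
qed

lemma cochain_zero_in_cochains:
  assumes "chain_setup K dC G dG"
  shows "cochain_zero G p \<in> cochains K G p"
proof -
  have "\<one>\<^bsub>G n\<^esub> \<in> carrier (G n)" for n
    using chain_setup_comm_group[OF assms, of n] by (simp add: comm_group.axioms(2) group.is_monoid)
  then show ?thesis by (simp add: cochains_def cochain_zero_def)
qed

lemma cochain_add_zero_left:
  assumes cs: "chain_setup K dC G dG" and h: "h \<in> cochains K G p"
  shows "cochain_add G p (cochain_zero G p) h = h"
proof (intro ext)
  fix n x
  interpret comm_group "G (n - p)" using chain_setup_comm_group[OF cs] .
  show "cochain_add G p (cochain_zero G p) h n x = h n x"
    using cochains_in_carrier[OF h comm_group_axioms]
    by (simp add: cochain_add_def cochain_zero_def)
qed

lemma coboundary_in_cochains: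
  assumes cs: "chain_setup K dC G dG" and f: "f \<in> cochains K G p"
  shows "coboundary K dC G dG p f \<in> cochains K G (p + 1)"
proof -
  have "coboundary K dC G dG p f n x \<in> carrier (G (n - 1 - p))" if "x \<in> K n" for n x
  proof -
    interpret comm_group "G (n - 1 - p)" using chain_setup_comm_group[OF cs] .
    have "f (n - 1) y \<in> carrier (G (n - 1 - p))" for y
      using cochains_in_carrier[OF f comm_group_axioms] .
    moreover have "dG (n - p) (f n x) \<in> carrier (G (n - 1 - p))"
      using group_hom.hom_closed[OF chain_setup_group_hom[OF cs, of "n - p"]]
        cochains_in_carrier[OF f chain_setup_comm_group[OF cs]]
      by (simp add: algebra_simps)
    ultimately show ?thesis
      using that by (simp add: coboundary_def finprod_closed)
  qed
  then show ?thesis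
    by (simp add: cochains_def coboundary_def algebra_simps)
qed

lemma coboundary_cochain_zero:
  assumes cs: "chain_setup K dC G dG"
  shows "coboundary K dC G dG p (cochain_zero G p) = cochain_zero G (p + 1)"
proof (intro ext)
  fix n x
  interpret comm_group "G (n - 1 - p)" using chain_setup_comm_group[OF cs] .
  have "dG (n - p) \<one>\<^bsub>G (n - p)\<^esub> = \<one>\<^bsub>G (n - 1 - p)\<^esub>"
    using group_hom.hom_one[OF chain_setup_group_hom[OF cs, of "n - p"]]
    by (simp add: diff_right_commute)
  moreover have "finprod (G (n - 1 - p)) (\<lambda>y. \<one>\<^bsub>G (n - 1 - p)\<^esub> [^]\<^bsub>G (n - 1 - p)\<^esub> dC n x y)
      (K (n - 1)) = \<one>\<^bsub>G (n - 1 - p)\<^esub>"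
    by (rule finprod_one_eqI) simp
  ultimately show "coboundary K dC G dG p (cochain_zero G p) n x = cochain_zero G (p + 1) n x"
    by (simp add: coboundary_def cochain_zero_def) (simp add: algebra_simps)
qed

lemma character_cochain_zero:
  assumes cs: "chain_setup K dC G dG" and m: "character K G m"
  shows "m (cochain_zero G 0) = 1"
proof -
  let ?z = "cochain_zero G 0"
  have z: "?z \<in> cochains K G 0" by (rule cochain_zero_in_cochains[OF cs])
  have "m ?z = m ?z * m ?z"
    using m z cochain_add_zero_left[OF cs z] unfolding character_def by metis
  moreover have "m ?z \<noteq> 0"
    using m z unfolding character_def by fastforce
  ultimately show ?thesis by (metis mult_cancel_left1)
qed

lemma projA0_ket_eq_card:
  assumes cs: "chain_setup K dC G dG" and f: "f \<in> cochains K G 0"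
  shows "projA0 K dC G dG (ket f) g =
    of_nat (card {t \<in> cochains K G (-1). cochain_add G 0 f (coboundary K dC G dG (-1) t) = g})
    / of_nat (card (cochains K G (-1)))"
proof -
  let ?hits = "\<lambda>t. cochain_add G 0 f (coboundary K dC G dG (-1) t) = g"
  have "opA K dC G dG t (ket f) g = (if ?hits t then 1 else 0)" for t
    using f finite_cochains[OF cs, of 0]
    by (simp add: opA_def shiftP_def ket_def sum.delta' cong: conj_cong)
  then show ?thesis
    using finite_cochains[OF cs, of "-1"]
    by (simp add: projA0_def sum.inter_filter[symmetric])
qed

lemma projA0_ket_nonzero_iff:
  assumes cs: "chain_setup K dC G dG" and f: "f \<in> cochains K G 0"
  shows "projA0 K dC G dG (ket f) g \<noteq> 0 \<longleftrightarrow>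
    (\<exists>t \<in> cochains K G (-1). cochain_add G 0 f (coboundary K dC G dG (-1) t) = g)"
proof -
  have "cochains K G (-1) \<noteq> {}"
    using cochain_zero_in_cochains[OF cs] by blast
  then show ?thesis
    using finite_cochains[OF cs, of "-1"] by (auto simp: projA0_ket_eq_card[OF cs f])
qed

lemma clockQ_projA0_ket_eigen_iff:
  assumes cs: "chain_setup K dC G dG" and f: "f \<in> cochains K G 0"
  shows "clockQ m (projA0 K dC G dG (ket f)) = (\<lambda>g. c * projA0 K dC G dG (ket f) g) \<longleftrightarrow>
    (\<forall>t \<in> cochains K G (-1). m (cochain_add G 0 f (coboundary K dC G dG (-1) t)) = c)"
proof -
  have "clockQ m (projA0 K dC G dG (ket f)) = (\<lambda>g. c * projA0 K dC G dG (ket f) g) \<longleftrightarrow>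
      (\<forall>g. projA0 K dC G dG (ket f) g \<noteq> 0 \<longrightarrow> m g = c)"
    by (auto simp: clockQ_def fun_eq_iff)
  also have "\<dots> \<longleftrightarrow>
      (\<forall>t \<in> cochains K G (-1). m (cochain_add G 0 f (coboundary K dC G dG (-1) t)) = c)"
    by (auto simp: projA0_ket_nonzero_iff[OF cs f])
  finally show ?thesis .
qed

theorem proposition6:
  fixes K :: "int \<Rightarrow> 'k set" and dC :: "int \<Rightarrow> 'k \<Rightarrow> 'k \<Rightarrow> int"
    and G :: "int \<Rightarrow> 'g monoid" and dG :: "int \<Rightarrow> 'g \<Rightarrow> 'g"
    and m :: "(int \<Rightarrow> 'k \<Rightarrow> 'g) \<Rightarrow> complex"
  assumes "chain_setup K dC G dG"
    and "character K G m"
  shows "(\<forall>f\<in>cochains K G 0. coboundary K dC G dG 0 f = cochain_zero G 1 \<longrightarrow>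
            (\<exists>c::complex. clockQ m (projA0 K dC G dG (ket f))
                           = (\<lambda>g. c * projA0 K dC G dG (ket f) g)))
         \<longleftrightarrow> (\<forall>t\<in>cochains K G (-1). m (coboundary K dC G dG (-1) t) = 1)"
proof -
  note cs = assms(1)
  let ?d = "coboundary K dC G dG (-1)"
  have shift: "m (cochain_add G 0 f (?d t)) = m f * m (?d t)"
    if "f \<in> cochains K G 0" "t \<in> cochains K G (-1)" for f t
    using assms(2) that coboundary_in_cochains[OF cs that(2)] by (simp add: character_def)
  show ?thesis
  proof
    let ?z = "cochain_zero G 0"
    assume "\<forall>f\<in>cochains K G 0. coboundary K dC G dG 0 f = cochain_zero G 1 \<longrightarrow>
      (\<exists>c. clockQ m (projA0 K dC G dG (ket f)) = (\<lambda>g. c * projA0 K dC G dG (ket f) g))"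
    then obtain c where c: "\<forall>t \<in> cochains K G (-1). m (cochain_add G 0 ?z (?d t)) = c"
      using cochain_zero_in_cochains[OF cs] coboundary_cochain_zero[OF cs, of 0]
        clockQ_projA0_ket_eigen_iff[OF cs] by fastforce
    have z: "?z \<in> cochains K G 0" "cochain_zero G (-1) \<in> cochains K G (-1)"
      using cochain_zero_in_cochains[OF cs] by auto
    have "m ?z = 1" by (rule character_cochain_zero[OF cs assms(2)])
    moreover have "?d (cochain_zero G (-1)) = ?z"
      using coboundary_cochain_zero[OF cs, of "-1"] by simp
    ultimately have "c = 1"
      using c z by (metis mult_1 shift)
    with c z show "\<forall>t\<in>cochains K G (-1). m (?d t) = 1"
      by (simp add: shift \<open>m ?z = 1\<close>)
  next
    assume "\<forall>t\<in>cochains K G (-1). m (?d t) = 1"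
    then show "\<forall>f\<in>cochains K G 0. coboundary K dC G dG 0 f = cochain_zero G 1 \<longrightarrow>
      (\<exists>c. clockQ m (projA0 K dC G dG (ket f)) = (\<lambda>g. c * projA0 K dC G dG (ket f) g))"
      by (auto simp: clockQ_projA0_ket_eigen_iff[OF cs] shift)
  qed
qed

end
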